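(* Let $T_k=M_1M_2\cdots M_k$. Then $\delta(T_k)$ converges to $0$ almost surely as $k\to\infty$.
   Context: Let $\mathcal{G}=(\mathcal{V},\mathcal{E})$ be a strongly connected directed graph with $\mathcal{V}=\{1,\dots,m\}$, with a self-loop $(i,i)\in\mathcal{E}$ at every node. Let $\mathcal{O}_i=\{j:(i,j)\in\mathcal{E}\}$ and $D_i=|\mathcal{O}_i|$. At each time step $k\ge1$ each link $(i,j)\in\mathcal{E}$ is reliable with probability $q_{ij}\in(0,1]$, independently across links and across time steps; let $X_k[i,j]=1$ if $(i,j)$ is reliable at step $k$ and $0$ otherwise. Let $n=m+|\mathcal{E}|$ and index rows/columns of $n\times n$ matrices by $\mathcal{V}\cup\mathcal{E}$. The random matrix $M_k$ is defined by: for $i\in\mathcal{V}$ and $(i,j)\in\mathcal{E}$, $M_k[i,j]=X_k[i,j]/D_i$ and $M_k[i,(i,j)]=(1-X_k[i,j])/D_i$, all other entries of row $i$ being $0$; for $(i,j)\in\mathcal{E}$, $M_k[(i,j),j]=X_k[i,j]$ and $M_k[(i,j),(i,j)]=1-X_k[i,j]$, all other entries of row $(i,j)$ being $0$. For a row stochastic matrix $A$, $\delta(A)=\max_j\max_{i_1,i_2}|A[i_1,j]-A[i_2,j]|$. *)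

theory Defs
  imports "HOL-Probability.Probability"
begin

text \<open>Nodes are the elements of a finite type 'v (playing the role of {1..m});
  links are the pairs in E.  Rows/columns of the n x n matrices are indexed by
  the set  idx E = Inl ` UNIV \<union> Inr ` E  (i.e. V \<union> E).
  Matrices are functions idx \<Rightarrow> idx \<Rightarrow> real, only meaningful on idx E.
  A realization of the link states at step k is x k :: 'v \<times> 'v \<Rightarrow> bool.\<close>

type_synonym 'v ix = "'v + ('v \<times> 'v)"

definition idx :: "('v \<times> 'v) set \<Rightarrow> 'v ix set" where
  "idx E = range Inl \<union> Inr ` E"

definition outdeg :: "('v \<times> 'v) set \<Rightarrow> 'v \<Rightarrow> nat" where
  "outdeg E i = card {j. (i, j) \<in> E}"

definition Mmat :: "('v \<times> 'v) set \<Rightarrow> ('v \<times> 'v \<Rightarrow> bool) \<Rightarrow> 'v ix \<Rightarrow> 'v ix \<Rightarrow> real" where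
  "Mmat E x a b = (case (a, b) of
      (Inl i, Inl j) \<Rightarrow> (if (i, j) \<in> E then of_bool (x (i, j)) / real (outdeg E i) else 0)
    | (Inl i, Inr (i', j)) \<Rightarrow> (if (i', j) \<in> E \<and> i' = i then (1 - of_bool (x (i, j))) / real (outdeg E i) else 0)
    | (Inr (i, j), Inl j') \<Rightarrow> (if (i, j) \<in> E \<and> j' = j then of_bool (x (i, j)) else 0)
    | (Inr e, Inr e') \<Rightarrow> (if e \<in> E \<and> e' = e then 1 - of_bool (x e) else 0))"

definition mat_mult :: "'a set \<Rightarrow> ('a \<Rightarrow> 'a \<Rightarrow> real) \<Rightarrow> ('a \<Rightarrow> 'a \<Rightarrow> real) \<Rightarrow> 'a \<Rightarrow> 'a \<Rightarrow> real" where
  "mat_mult I A B = (\<lambda>a c. \<Sum>b\<in>I. A a b * B b c)"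

fun Tprod :: "('v \<times> 'v) set \<Rightarrow> (nat \<Rightarrow> 'v \<times> 'v \<Rightarrow> bool) \<Rightarrow> nat \<Rightarrow> 'v ix \<Rightarrow> 'v ix \<Rightarrow> real" where
  "Tprod E x 0 = (\<lambda>a b. of_bool (a = b))"
| "Tprod E x (Suc k) = mat_mult (idx E) (Tprod E x k) (Mmat E (x (Suc k)))"

definition delta :: "'a set \<Rightarrow> ('a \<Rightarrow> 'a \<Rightarrow> real) \<Rightarrow> real" where
  "delta I A = Max {\<bar>A i1 j - A i2 j\<bar> | i1 i2 j. i1 \<in> I \<and> i2 \<in> I \<and> j \<in> I}"

end

theory Submission
  imports Defs
begin

text \<open>Every M_k is row stochastic, so the largest l1-distance between two rows of T_k
  (twice Dobrushin's ergodicity coefficient, an upper bound for delta) is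
  nonincreasing in k, and it is submultiplicative up to a factor 1/2.  As the graph is
  strongly connected with self-loops, there is an L such that, when all links are
  reliable, every node and every link reaches every node in exactly L steps; hence the
  product of L matrices with all links reliable has a strictly positive column and
  coefficient below 2.  The events "all links reliable during (mL, mL + L]" are
  independent with a common positive probability, so by the Borel 0-1 law infinitely
  many of them occur almost surely, and each occurrence contracts the coefficient of
  T_k by a fixed factor.\<close>

definition stochastic :: "'a set \<Rightarrow> ('a \<Rightarrow> 'a \<Rightarrow> real) \<Rightarrow> bool" where
  "stochastic I A \<longleftrightarrow> (\<forall>a\<in>I. \<forall>b\<in>I. 0 \<le> A a b) \<and> (\<forall>a\<in>I. (\<Sum>b\<in>I. A a b) = 1)"

lemma mat_mult_assoc:
  "mat_mult I (mat_mult I A B) C = mat_mult I A (mat_mult I B C)"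
proof (intro ext)
  fix a c
  have "(\<Sum>b\<in>I. (\<Sum>d\<in>I. A a d * B d b) * C b c) = (\<Sum>b\<in>I. \<Sum>d\<in>I. A a d * (B d b * C b c))"
    by (simp add: sum_distrib_right mult.assoc)
  also have "\<dots> = (\<Sum>d\<in>I. A a d * (\<Sum>b\<in>I. B d b * C b c))"
    by (subst sum.swap) (simp add: sum_distrib_left)
  finally show "mat_mult I (mat_mult I A B) C a c = mat_mult I A (mat_mult I B C) a c"
    by (simp add: mat_mult_def)
qed

lemma mat_mult_id_left:
  "finite I \<Longrightarrow> a \<in> I \<Longrightarrow> mat_mult I (\<lambda>a b. of_bool (a = b)) A a c = A a c"
  by (simp add: mat_mult_def if_distrib cong: if_cong)

lemma mat_mult_id_right:
  "finite I \<Longrightarrow> c \<in> I \<Longrightarrow> mat_mult I A (\<lambda>a b. of_bool (a = b)) a c = A a c"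
  by (simp add: mat_mult_def if_distrib cong: if_cong)

lemma mat_mult_ge_term:
  assumes "finite I" "d \<in> I" "\<And>b. b \<in> I \<Longrightarrow> 0 \<le> A a b * B b c"
  shows "A a d * B d c \<le> mat_mult I A B a c"
  unfolding mat_mult_def using assms by (intro member_le_sum) auto

lemma stochastic_id: "finite I \<Longrightarrow> stochastic I (\<lambda>a b. of_bool (a = b))"
  by (simp add: stochastic_def if_distrib cong: if_cong)

lemma stochastic_mat_mult:
  assumes "stochastic I A" "stochastic I B"
  shows "stochastic I (mat_mult I A B)"
proof -
  have "(\<Sum>c\<in>I. mat_mult I A B a c) = (\<Sum>b\<in>I. A a b * (\<Sum>c\<in>I. B b c))" for a
    unfolding mat_mult_def sum_distrib_left by (rule sum.swap)
  with assms show ?thesis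
    unfolding stochastic_def mat_mult_def by (auto intro!: sum_nonneg)
qed

definition dobrushin :: "'a set \<Rightarrow> ('a \<Rightarrow> 'a \<Rightarrow> real) \<Rightarrow> real" where
  "dobrushin I A = Max ((\<lambda>(i1, i2). \<Sum>j\<in>I. \<bar>A i1 j - A i2 j\<bar>) ` (I \<times> I))"

lemma row_dist_le_dobrushin:
  "finite I \<Longrightarrow> i1 \<in> I \<Longrightarrow> i2 \<in> I \<Longrightarrow> (\<Sum>j\<in>I. \<bar>A i1 j - A i2 j\<bar>) \<le> dobrushin I A"
  unfolding dobrushin_def by (intro Max_ge) force+

lemma dobrushin_le:
  assumes "finite I" "I \<noteq> {}"
    and "\<And>i1 i2. i1 \<in> I \<Longrightarrow> i2 \<in> I \<Longrightarrow> (\<Sum>j\<in>I. \<bar>A i1 j - A i2 j\<bar>) \<le> r"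
  shows "dobrushin I A \<le> r"
  unfolding dobrushin_def using assms by (subst Max_le_iff) auto

lemma dobrushin_less:
  assumes "finite I" "I \<noteq> {}"
    and "\<And>i1 i2. i1 \<in> I \<Longrightarrow> i2 \<in> I \<Longrightarrow> (\<Sum>j\<in>I. \<bar>A i1 j - A i2 j\<bar>) < r"
  shows "dobrushin I A < r"
  unfolding dobrushin_def using assms by (subst Max_less_iff) auto

lemma dobrushin_nonneg: "finite I \<Longrightarrow> I \<noteq> {} \<Longrightarrow> 0 \<le> dobrushin I A"
  using row_dist_le_dobrushin[of I _ _ A] by (force intro: order_trans[OF sum_nonneg])

lemma dobrushin_cong:
  "(\<And>a b. a \<in> I \<Longrightarrow> b \<in> I \<Longrightarrow> A a b = B a b) \<Longrightarrow> dobrushin I A = dobrushin I B"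
  unfolding dobrushin_def by (intro arg_cong[where f = Max] image_cong refl) (auto intro!: sum.cong)

lemma delta_bounds:
  assumes "finite I" "I \<noteq> {}"
  shows "0 \<le> delta I A" "delta I A \<le> dobrushin I A"
proof -
  have set_eq: "{\<bar>A i1 j - A i2 j\<bar> | i1 i2 j. i1 \<in> I \<and> i2 \<in> I \<and> j \<in> I}
      = (\<lambda>(i1, i2, j). \<bar>A i1 j - A i2 j\<bar>) ` (I \<times> I \<times> I)"
    by force
  obtain i where i: "i \<in> I" using assms by auto
  show "0 \<le> delta I A"
    unfolding delta_def set_eq using assms i
    by (intro order.trans[OF _ Max_ge[where x = "\<bar>A i i - A i i\<bar>"]]) force+
  have "\<bar>A i1 j - A i2 j\<bar> \<le> dobrushin I A" if "i1 \<in> I" "i2 \<in> I" "j \<in> I" for i1 i2 j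
    using member_le_sum[of j I "\<lambda>j. \<bar>A i1 j - A i2 j\<bar>"] row_dist_le_dobrushin[of I i1 i2 A]
      assms that by simp
  then show "delta I A \<le> dobrushin I A"
    unfolding delta_def set_eq using assms by (subst Max_le_iff) auto
qed

lemma dobrushin_le_2:
  assumes "finite I" "I \<noteq> {}" "stochastic I A"
  shows "dobrushin I A \<le> 2"
proof (rule dobrushin_le[OF assms(1,2)])
  fix i1 i2 assume "i1 \<in> I" "i2 \<in> I"
  then have "(\<Sum>j\<in>I. \<bar>A i1 j - A i2 j\<bar>) \<le> (\<Sum>j\<in>I. A i1 j + A i2 j)"
    using assms(3) unfolding stochastic_def by (intro sum_mono) (simp add: abs_le_iff)
  also have "\<dots> = 2"
    using \<open>i1 \<in> I\<close> \<open>i2 \<in> I\<close> assms(3) unfolding stochastic_def by (simp add: sum.distrib)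
  finally show "(\<Sum>j\<in>I. \<bar>A i1 j - A i2 j\<bar>) \<le> 2" .
qed

lemma dobrushin_less_2_of_positive_column:
  assumes "finite I" "stochastic I A" "j0 \<in> I" "\<And>a. a \<in> I \<Longrightarrow> 0 < A a j0"
  shows "dobrushin I A < 2"
proof (rule dobrushin_less[OF assms(1)])
  show "I \<noteq> {}" using assms(3) by auto
  fix i1 i2 assume i: "i1 \<in> I" "i2 \<in> I"
  have "(\<Sum>j\<in>I. \<bar>A i1 j - A i2 j\<bar>) = (\<Sum>j\<in>I. A i1 j + A i2 j - 2 * min (A i1 j) (A i2 j))"
    by (intro sum.cong) auto
  also have "\<dots> = 2 - 2 * (\<Sum>j\<in>I. min (A i1 j) (A i2 j))"
    using assms(2) i unfolding stochastic_def by (simp add: sum_subtractf sum.distrib sum_distrib_left)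
  also have "\<dots> < 2"
  proof -
    have "0 < min (A i1 j0) (A i2 j0)" using assms(4) i by auto
    also have "\<dots> \<le> (\<Sum>j\<in>I. min (A i1 j) (A i2 j))"
      using assms i unfolding stochastic_def by (intro member_le_sum) auto
    finally show ?thesis by simp
  qed
  finally show "(\<Sum>j\<in>I. \<bar>A i1 j - A i2 j\<bar>) < 2" .
qed

text \<open>Pairing with the sign pattern w of the result and recentring w at the midpoint of
  its range (allowed since u sums to 0) bounds the l1-norm of u A by half the
  oscillation of w, which is at most the distance of two rows of A.\<close>

lemma l1_norm_zero_sum_mult_le:
  fixes u :: "'a \<Rightarrow> real"
  assumes fin: "finite I" and ne: "I \<noteq> {}" and u0: "(\<Sum>b\<in>I. u b) = 0"
  shows "(\<Sum>j\<in>I. \<bar>\<Sum>b\<in>I. u b * A b j\<bar>) \<le> dobrushin I A / 2 * (\<Sum>b\<in>I. \<bar>u b\<bar>)"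
proof -
  define v where "v j = (\<Sum>b\<in>I. u b * A b j)" for j
  define w where "w b = (\<Sum>j\<in>I. sgn (v j) * A b j)" for b
  define m0 where "m0 = (Max (w ` I) + Min (w ` I)) / 2"
  have osc: "w b1 - w b2 \<le> dobrushin I A" if "b1 \<in> I" "b2 \<in> I" for b1 b2
  proof -
    have "w b1 - w b2 = (\<Sum>j\<in>I. sgn (v j) * (A b1 j - A b2 j))"
      unfolding w_def by (simp add: sum_subtractf algebra_simps)
    also have "\<dots> \<le> (\<Sum>j\<in>I. \<bar>A b1 j - A b2 j\<bar>)"
      by (intro sum_mono) (auto simp: sgn_real_def)
    finally show ?thesis using row_dist_le_dobrushin[OF fin that, of A] by linarith
  qed
  have "\<bar>w b - m0\<bar> \<le> dobrushin I A / 2" if "b \<in> I" for b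
  proof -
    obtain b1 b2 where "b1 \<in> I" "Max (w ` I) = w b1" "b2 \<in> I" "Min (w ` I) = w b2"
      using Max_in[of "w ` I"] Min_in[of "w ` I"] fin ne by fastforce
    moreover have "w b \<le> Max (w ` I)" "Min (w ` I) \<le> w b" using fin that by auto
    ultimately show ?thesis using osc[of b1 b2] unfolding m0_def by (auto simp: abs_le_iff field_simps)
  qed
  then have term_le: "u b * (w b - m0) \<le> \<bar>u b\<bar> * (dobrushin I A / 2)" if "b \<in> I" for b
    using that abs_ge_self[of "u b * (w b - m0)"] mult_left_mono[of _ _ "\<bar>u b\<bar>"]
    by (fastforce simp: abs_mult)
  have "(\<Sum>j\<in>I. \<bar>v j\<bar>) = (\<Sum>j\<in>I. \<Sum>b\<in>I. u b * (sgn (v j) * A b j))"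
    unfolding v_def by (intro sum.cong) (auto simp: abs_sgn sum_distrib_left sum_distrib_right ac_simps)
  also have "\<dots> = (\<Sum>b\<in>I. u b * w b)"
    unfolding w_def sum_distrib_left by (rule sum.swap)
  also have "\<dots> = (\<Sum>b\<in>I. u b * (w b - m0))"
    using u0 by (simp add: algebra_simps sum_subtractf flip: sum_distrib_left)
  also have "\<dots> \<le> (\<Sum>b\<in>I. \<bar>u b\<bar> * (dobrushin I A / 2))"
    by (intro sum_mono term_le)
  also have "\<dots> = dobrushin I A / 2 * (\<Sum>b\<in>I. \<bar>u b\<bar>)"
    by (simp add: sum_distrib_left mult.commute)
  finally show ?thesis unfolding v_def .
qed

lemma dobrushin_mat_mult_le:
  assumes fin: "finite I" and ne: "I \<noteq> {}" and A: "stochastic I A"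
  shows "dobrushin I (mat_mult I A B) \<le> dobrushin I A * dobrushin I B / 2"
proof (rule dobrushin_le[OF fin ne])
  fix i1 i2 assume i: "i1 \<in> I" "i2 \<in> I"
  define u where "u b = A i1 b - A i2 b" for b
  have u0: "(\<Sum>b\<in>I. u b) = 0"
    using A i unfolding u_def stochastic_def by (simp add: sum_subtractf)
  have "(\<Sum>j\<in>I. \<bar>mat_mult I A B i1 j - mat_mult I A B i2 j\<bar>) = (\<Sum>j\<in>I. \<bar>\<Sum>b\<in>I. u b * B b j\<bar>)"
    unfolding mat_mult_def u_def by (simp add: sum_subtractf left_diff_distrib)
  also have "\<dots> \<le> dobrushin I B / 2 * (\<Sum>b\<in>I. \<bar>u b\<bar>)"
    by (rule l1_norm_zero_sum_mult_le[OF fin ne u0])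
  also have "\<dots> \<le> dobrushin I B / 2 * dobrushin I A"
    using row_dist_le_dobrushin[OF fin i, of A] dobrushin_nonneg[OF fin ne, of B]
    unfolding u_def by (intro mult_left_mono) auto
  finally show "(\<Sum>j\<in>I. \<bar>mat_mult I A B i1 j - mat_mult I A B i2 j\<bar>) \<le> dobrushin I A * dobrushin I B / 2"
    by (simp add: mult.commute)
qed

lemma decseq_tendsto_0_of_frequent_contraction:
  fixes s :: "nat \<Rightarrow> real"
  assumes "decseq s" "\<And>n. 0 \<le> s n" "\<kappa> < 1"
    and "\<exists>\<^sub>F n in sequentially. s (n + L) \<le> \<kappa> * s n"
  shows "s \<longlonglongrightarrow> 0"
proof -
  obtain l where l: "s \<longlonglongrightarrow> l" "\<And>n. l \<le> s n"
    using decseq_convergent[OF assms(1), of 0] assms(2) by blast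
  have "l \<le> \<kappa> * l"
  proof (rule ccontr)
    assume "\<not> l \<le> \<kappa> * l"
    moreover have "(\<lambda>n. s (n + L) - \<kappa> * s n) \<longlonglongrightarrow> l - \<kappa> * l"
      using l(1) by (intro tendsto_intros) (rule LIMSEQ_ignore_initial_segment)
    ultimately have "\<forall>\<^sub>F n in sequentially. 0 < s (n + L) - \<kappa> * s n"
      by (intro order_tendstoD(1)) auto
    with assms(4) show False
      unfolding frequently_def by (simp add: eventually_mono not_le)
  qed
  moreover have "0 \<le> l" using l(1) assms(2) by (intro LIMSEQ_le_const) auto
  ultimately show ?thesis using l(1) assms(3) by (metis mult_le_cancel_right1 order_antisym not_less)
qed

lemma sum_idx:
  fixes E :: "('v::finite \<times> 'v) set"
  shows "(\<Sum>b\<in>idx E. f b) = (\<Sum>j\<in>UNIV. f (Inl j)) + (\<Sum>e\<in>E. f (Inr e))"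
  unfolding idx_def by (subst sum.union_disjoint) (auto simp: sum.reindex)

lemma idx_nonempty: "idx E \<noteq> {}"
  by (simp add: idx_def)

lemma outdeg_pos:
  fixes E :: "('v::finite \<times> 'v) set"
  shows "(i, j) \<in> E \<Longrightarrow> 0 < outdeg E i"
  unfolding outdeg_def by (auto simp: card_gt_0_iff)

lemma Mmat_nonneg: "0 \<le> Mmat E x a b"
  unfolding Mmat_def by (auto split: sum.splits prod.splits)

lemma stochastic_Mmat:
  fixes E :: "('v::finite \<times> 'v) set"
  assumes self_loops: "\<forall>i. (i, i) \<in> E"
  shows "stochastic (idx E) (Mmat E x)"
  unfolding stochastic_def
proof (intro conjI ballI Mmat_nonneg)
  fix r assume r: "r \<in> idx E"
  show "(\<Sum>b\<in>idx E. Mmat E x r b) = 1"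
  proof (cases r)
    case (Inl i)
    define D where "D = real (outdeg E i)"
    have D: "0 < D" using outdeg_pos[of i i E] self_loops by (simp add: D_def)
    have "(\<Sum>b\<in>idx E. Mmat E x r b)
        = (\<Sum>j\<in>{j. (i, j) \<in> E}. of_bool (x (i, j)) / D) + (\<Sum>j\<in>{j. (i, j) \<in> E}. (1 - of_bool (x (i, j))) / D)"
    proof -
      have "(\<Sum>j\<in>UNIV. Mmat E x r (Inl j)) = (\<Sum>j\<in>{j. (i, j) \<in> E}. of_bool (x (i, j)) / D)"
        by (rule sum.mono_neutral_cong_right) (auto simp: Inl Mmat_def D_def)
      moreover have "(\<Sum>e\<in>E. Mmat E x r (Inr e)) = (\<Sum>e\<in>Pair i ` {j. (i, j) \<in> E}. (1 - of_bool (x e)) / D)"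
        by (rule sum.mono_neutral_cong_right) (auto simp: Inl Mmat_def D_def)
      ultimately show ?thesis by (simp add: sum_idx sum.reindex inj_on_def)
    qed
    also have "\<dots> = (\<Sum>j\<in>{j. (i, j) \<in> E}. 1 / D)"
      unfolding sum.distrib[symmetric] add_divide_distrib[symmetric] by simp
    also have "\<dots> = 1" using D self_loops by (auto simp: D_def outdeg_def)
    finally show ?thesis .
  next
    case (Inr e)
    obtain i j where e: "e = (i, j)" by force
    have "(i, j) \<in> E" using r Inr e unfolding idx_def by auto
    then show ?thesis
      by (simp add: sum_idx Inr e Mmat_def sum.delta' if_distrib[of "\<lambda>b. b \<and> _"] cong: if_cong)
  qed
qed

lemma Tprod_nonneg: "0 \<le> Tprod E x n a b"
  by (induction n arbitrary: b) (auto simp: mat_mult_def intro!: sum_nonneg mult_nonneg_nonneg Mmat_nonneg)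

lemma stochastic_Tprod:
  fixes E :: "('v::finite \<times> 'v) set"
  assumes "\<forall>i. (i, i) \<in> E"
  shows "stochastic (idx E) (Tprod E x n)"
  by (induction n) (auto intro!: stochastic_mat_mult stochastic_id stochastic_Mmat assms)

lemma Tprod_add:
  fixes E :: "('v::finite \<times> 'v) set"
  assumes "c \<in> idx E"
  shows "Tprod E x (a + n) r c = mat_mult (idx E) (Tprod E x a) (Tprod E (\<lambda>k. x (a + k)) n) r c"
  using assms
proof (induction n arbitrary: c)
  case 0
  then show ?case by (simp add: mat_mult_id_right)
next
  case (Suc n)
  let ?M = "Mmat E (x (a + Suc n))"
  have "Tprod E x (a + Suc n) r c
      = mat_mult (idx E) (mat_mult (idx E) (Tprod E x a) (Tprod E (\<lambda>k. x (a + k)) n)) ?M r c"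
    using Suc.IH by (simp add: mat_mult_def)
  then show ?case by (simp add: mat_mult_assoc)
qed

lemma Mmat_cong_links: "\<forall>e\<in>E. x e = y e \<Longrightarrow> Mmat E x = Mmat E y"
  unfolding Mmat_def by (intro ext) (auto split: sum.splits prod.splits)

lemma Tprod_all_reliable:
  "\<forall>t\<in>{1..n}. \<forall>e\<in>E. x t e \<Longrightarrow> Tprod E x n = Tprod E (\<lambda>_ _. True) n"
  by (induction n) (auto intro!: arg_cong2[where f = "mat_mult (idx E)"] Mmat_cong_links)

lemma Tprod_all_reliable_walk_pos:
  fixes E :: "('v::finite \<times> 'v) set"
  assumes "0 < Tprod E (\<lambda>_ _. True) n r (Inl i)"
  shows "(i, j) \<in> E ^^ m \<Longrightarrow> 0 < Tprod E (\<lambda>_ _. True) (n + m) r (Inl j)"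
proof (induction m arbitrary: j)
  case 0
  then show ?case using assms by simp
next
  case (Suc m)
  then obtain y where y: "(i, y) \<in> E ^^ m" "(y, j) \<in> E" by auto
  have "0 < Mmat E (\<lambda>_. True) (Inl y) (Inl j)"
    using y(2) outdeg_pos[OF y(2)] by (simp add: Mmat_def)
  then have "0 < Tprod E (\<lambda>_ _. True) (n + m) r (Inl y) * Mmat E (\<lambda>_. True) (Inl y) (Inl j)"
    using Suc.IH[OF y(1)] by simp
  also have "\<dots> \<le> Tprod E (\<lambda>_ _. True) (n + Suc m) r (Inl j)"
    by (simp, rule mat_mult_ge_term) (auto simp: idx_def intro!: mult_nonneg_nonneg Tprod_nonneg Mmat_nonneg)
  finally show ?case .
qed

lemma relpow_mono_refl:
  assumes "\<forall>i. (i, i) \<in> R" "(a, b) \<in> R ^^ m" "m \<le> n"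
  shows "(a, b) \<in> R ^^ n"
  using assms(3)
proof (induction n rule: dec_induct)
  case (step n)
  then show ?case using assms(1) by auto
qed (fact assms(2))

lemma relpow_uniform_length:
  fixes R :: "('a::finite \<times> 'a) set"
  assumes refl: "\<forall>i. (i, i) \<in> R" and connected: "\<forall>i j. (i, j) \<in> R\<^sup>+"
  obtains N where "\<forall>i j. (i, j) \<in> R ^^ N"
proof -
  obtain len where len: "\<And>p. p \<in> R ^^ len p"
    using connected by (metis trancl_power surj_pair)
  have "p \<in> R ^^ Max (range len)" for p
    using len[of p] by (cases p) (auto intro: relpow_mono_refl[OF refl])
  then show ?thesis using that by blast
qed

lemma Tprod_all_reliable_positive:
  fixes E :: "('v::finite \<times> 'v) set"
  assumes self_loops: "\<forall>i. (i, i) \<in> E" and strongly_connected: "\<forall>i j. (i, j) \<in> E\<^sup>+"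
  obtains L where "0 < L" "\<And>r j. r \<in> idx E \<Longrightarrow> 0 < Tprod E (\<lambda>_ _. True) L r (Inl j)"
proof -
  obtain N where N: "\<forall>i j. (i, j) \<in> E ^^ N"
    using relpow_uniform_length[OF self_loops strongly_connected] .
  have "0 < Tprod E (\<lambda>_ _. True) (1 + N) r (Inl j)" if r: "r \<in> idx E" for r j
  proof -
    obtain i where "0 < Mmat E (\<lambda>_. True) r (Inl i)"
    proof (cases r)
      case (Inl i)
      then show ?thesis using that[of i] self_loops outdeg_pos[of i i E] by (simp add: Mmat_def)
    next
      case (Inr e)
      then show ?thesis using that[of "snd e"] r by (auto simp: Mmat_def idx_def)
    qed
    then have "0 < Tprod E (\<lambda>_ _. True) 1 r (Inl i)"
      using r by (simp add: mat_mult_id_left)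
    then show ?thesis using N Tprod_all_reliable_walk_pos by blast
  qed
  then show ?thesis using that[of "1 + N"] by simp
qed

lemma delta_Tprod_tendsto_0:
  fixes E :: "('v::finite \<times> 'v) set"
  assumes self_loops: "\<forall>i. (i, i) \<in> E"
    and positive: "\<And>r. r \<in> idx E \<Longrightarrow> 0 < Tprod E (\<lambda>_ _. True) L r (Inl j)"
    and good_blocks: "\<exists>\<^sub>F a in sequentially. \<forall>t\<in>{1..L}. \<forall>e\<in>E. x (a + t) e"
  shows "(\<lambda>k. delta (idx E) (Tprod E x k)) \<longlonglongrightarrow> 0"
proof -
  let ?I = "idx E"
  have fin: "finite ?I" and ne: "?I \<noteq> {}" by (simp_all add: idx_nonempty)
  define s where "s k = dobrushin ?I (Tprod E x k)" for k
  have s_nonneg: "0 \<le> s k" for k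
    unfolding s_def by (rule dobrushin_nonneg[OF fin ne])
  have s_add: "s (a + n) \<le> s a * dobrushin ?I (Tprod E (\<lambda>k. x (a + k)) n) / 2" for a n
  proof -
    have "s (a + n) = dobrushin ?I (mat_mult ?I (Tprod E x a) (Tprod E (\<lambda>k. x (a + k)) n))"
      unfolding s_def by (intro dobrushin_cong Tprod_add)
    then show ?thesis
      unfolding s_def using dobrushin_mat_mult_le[OF fin ne stochastic_Tprod[OF self_loops]] by simp
  qed
  have "decseq s"
  proof (rule decseq_SucI)
    fix k
    have "s k * dobrushin ?I (Tprod E (\<lambda>i. x (k + i)) 1) \<le> s k * 2"
      using dobrushin_le_2[OF fin ne stochastic_Tprod[OF self_loops]] s_nonneg[of k]
      by (rule mult_left_mono)
    then show "s (Suc k) \<le> s k"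
      using s_add[of k 1] by simp
  qed
  define \<kappa> where "\<kappa> = dobrushin ?I (Tprod E (\<lambda>_ _. True) L) / 2"
  have "\<kappa> < 1"
    using dobrushin_less_2_of_positive_column[OF fin stochastic_Tprod[OF self_loops] _ positive]
    by (simp add: \<kappa>_def idx_def)
  moreover have "\<exists>\<^sub>F a in sequentially. s (a + L) \<le> \<kappa> * s a"
    using good_blocks
  proof (rule frequently_elim1)
    fix a assume "\<forall>t\<in>{1..L}. \<forall>e\<in>E. x (a + t) e"
    then have "Tprod E (\<lambda>k. x (a + k)) L = Tprod E (\<lambda>_ _. True) L"
      by (rule Tprod_all_reliable)
    then show "s (a + L) \<le> \<kappa> * s a"
      using s_add[of a L] by (simp add: \<kappa>_def mult.commute)
  qed
  ultimately have "s \<longlonglongrightarrow> 0"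
    using decseq_tendsto_0_of_frequent_contraction[OF \<open>decseq s\<close> s_nonneg] by blast
  moreover have "0 \<le> delta ?I (Tprod E x k)" "delta ?I (Tprod E x k) \<le> s k" for k
    unfolding s_def by (fact delta_bounds[OF fin ne])+
  ultimately show ?thesis
    using tendsto_sandwich[of "\<lambda>_. 0" "\<lambda>k. delta ?I (Tprod E x k)" sequentially s 0] by simp
qed

lemma (in prob_space) indep_events_all_on_blocks:
  assumes indep: "indep_vars (\<lambda>_. count_space UNIV) X I"
    and blocks: "\<And>m. J m \<subseteq> I" "\<And>m. finite (J m)" "disjoint_family J"
  shows "indep_events (\<lambda>m. {\<omega> \<in> space M. \<forall>i\<in>J m. X i \<omega>}) UNIV"
proof -
  have "indep_events (\<lambda>m. {\<omega> \<in> space M. \<forall>i\<in>J m. restrict (\<lambda>i. X i \<omega>) (J m) i}) UNIV"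
  proof (rule indep_eventsI_indep_vars[OF indep_vars_restrict[OF indep blocks(1,3)]])
    fix m
    have "{f \<in> space (PiM (J m) (\<lambda>_. count_space UNIV)). \<forall>i\<in>J m. f i} = PiE (J m) (\<lambda>_. {True})"
      by (auto simp: space_PiM PiE_iff extensional_def fun_eq_iff)
    also have "\<dots> \<in> sets (PiM (J m) (\<lambda>_. count_space UNIV))"
      using blocks(2) by (intro sets_PiM_I_finite) auto
    finally show "{f \<in> space (PiM (J m) (\<lambda>_. count_space UNIV)). \<forall>i\<in>J m. f i}
        \<in> sets (PiM (J m) (\<lambda>_. count_space UNIV))" .
  qed
  then show ?thesis by simp
qed

lemma (in prob_space) prob_all_of_indep_vars:
  assumes indep: "indep_vars (\<lambda>_. count_space UNIV) X I"
    and "J \<subseteq> I" "finite J" "J \<noteq> {}"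
  shows "prob {\<omega> \<in> space M. \<forall>i\<in>J. X i \<omega>} = (\<Prod>i\<in>J. prob {\<omega> \<in> space M. X i \<omega>})"
proof -
  have "{\<omega> \<in> space M. \<forall>i\<in>J. X i \<omega>} = (\<Inter>i\<in>J. X i -` {True} \<inter> space M)"
    using assms(4) by auto
  then show ?thesis
    using indep_varsD[OF indep assms(4,3,2), of "\<lambda>_. {True}"] by (simp add: vimage_def Int_def conj_commute)
qed

lemma (in prob_space) AE_frequently_of_indep_events:
  assumes indep: "indep_events (\<lambda>m. {\<omega> \<in> space M. Q m \<omega>}) UNIV"
    and "0 < p" "\<And>m. p \<le> prob {\<omega> \<in> space M. Q m \<omega>}"
  shows "AE \<omega> in M. \<exists>\<^sub>F m in sequentially. Q m \<omega>"
proof -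
  define G where "G m = {\<omega> \<in> space M. Q m \<omega>}" for m
  define U where "U n = (\<Union>m\<in>{n..}. G m)" for n
  have G_ev: "G m \<in> events" for m
    using indep unfolding G_def indep_events_def by auto
  have U_ev: "U n \<in> events" for n
    unfolding U_def by (intro sets.countable_UN'') (auto simp: G_ev)
  have "(\<lambda>n. prob (U n)) \<longlonglongrightarrow> prob (\<Inter>n. U n)"
    using U_ev by (intro finite_Lim_measure_decseq) (auto simp: decseq_def U_def intro: order_trans)
  moreover have "p \<le> prob (U n)" for n
    using assms(3)[of n] finite_measure_mono[of "G n" "U n"] U_ev
    unfolding G_def U_def by fastforce
  ultimately have "p \<le> prob (\<Inter>n. U n)"
    by (intro LIMSEQ_le_const) auto
  then have "prob (\<Inter>n. U n) = 1"
    using borel_0_1_law[OF indep[folded G_def]] \<open>0 < p\<close> unfolding U_def by auto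
  then have "AE \<omega> in M. \<omega> \<in> (\<Inter>n. U n)"
    by (rule AE_prob_1)
  then show ?thesis
    by (rule eventually_mono) (auto simp: U_def G_def frequently_sequentially)
qed

lemma disjoint_family_consecutive_blocks:
  "disjoint_family (\<lambda>m::nat. {m * L<..m * L + L})"
  unfolding disjoint_family_on_def
proof (intro ballI impI)
  fix m n :: nat assume "m \<noteq> n"
  then have "m * L + L \<le> n * L \<or> n * L + L \<le> m * L"
    using mult_le_mono1[of "Suc m" n L] mult_le_mono1[of "Suc n" m L] by (auto simp: linorder_neq_iff)
  then show "{m * L<..m * L + L} \<inter> {n * L<..n * L + L} = {}"
    by auto
qed

lemma frequently_window_of_frequently_block:
  fixes L :: nat
  assumes "0 < L" and "\<exists>\<^sub>F m in sequentially. \<forall>(k, e)\<in>{m * L<..m * L + L} \<times> E. P k e"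
  shows "\<exists>\<^sub>F a in sequentially. \<forall>t\<in>{1..L}. \<forall>e\<in>E. P (a + t) e"
  unfolding frequently_sequentially
proof
  fix n
  obtain m where "n \<le> m" and block: "\<forall>(k, e)\<in>{m * L<..m * L + L} \<times> E. P k e"
    using assms(2) unfolding frequently_sequentially by blast
  have "n \<le> m * L" using \<open>n \<le> m\<close> \<open>0 < L\<close> by (simp add: le_trans)
  moreover have "\<forall>t\<in>{1..L}. \<forall>e\<in>E. P (m * L + t) e"
    using block by auto
  ultimately show "\<exists>a\<ge>n. \<forall>t\<in>{1..L}. \<forall>e\<in>E. P (a + t) e" by blast
qed

lemma (in prob_space) AE_frequently_all_reliable_window:
  fixes X :: "nat \<Rightarrow> 'e \<Rightarrow> 'a \<Rightarrow> bool" and L :: nat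
  assumes "finite E" "E \<noteq> {}" "0 < L"
    and indep: "indep_vars (\<lambda>_. count_space UNIV) (\<lambda>(k, e). X k e) {(k, e). 1 \<le> k \<and> e \<in> E}"
    and reliable_prob: "\<forall>k\<ge>1. \<forall>e\<in>E. prob {\<omega> \<in> space M. X k e \<omega>} = q e"
    and q_pos: "\<forall>e\<in>E. 0 < q e"
  shows "AE \<omega> in M. \<exists>\<^sub>F a in sequentially. \<forall>t\<in>{1..L}. \<forall>e\<in>E. X (a + t) e \<omega>"
proof -
  define J where "J m = {m * L<..m * L + L} \<times> E" for m
  have J_sub: "J m \<subseteq> {(k, e). 1 \<le> k \<and> e \<in> E}" and "finite (J m)" and "J m \<noteq> {}" for m
    using assms(1-3) by (auto simp: J_def)
  have "disjoint_family J"
    using disjoint_family_consecutive_blocks[of L] unfolding J_def disjoint_family_on_def by blast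
  then have "indep_events (\<lambda>m. {\<omega> \<in> space M. \<forall>(k, e)\<in>J m. X k e \<omega>}) UNIV"
    using indep_events_all_on_blocks[OF indep J_sub \<open>finite (J _)\<close>] by (simp add: case_prod_unfold)
  moreover have "prob {\<omega> \<in> space M. \<forall>(k, e)\<in>J m. X k e \<omega>} = (\<Prod>e\<in>E. q e) ^ L" for m
  proof -
    have "prob {\<omega> \<in> space M. \<forall>(k, e)\<in>J m. X k e \<omega>} = (\<Prod>(k, e)\<in>J m. q e)"
      using prob_all_of_indep_vars[OF indep J_sub \<open>finite (J m)\<close> \<open>J m \<noteq> {}\<close>] reliable_prob J_sub
      by (auto simp: case_prod_unfold intro!: prod.cong)
    then show ?thesis by (simp add: J_def prod.cartesian_product[symmetric])
  qed
  moreover have "0 < (\<Prod>e\<in>E. q e) ^ L"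
    using q_pos by (intro zero_less_power prod_pos) auto
  ultimately have "AE \<omega> in M. \<exists>\<^sub>F m in sequentially. \<forall>(k, e)\<in>J m. X k e \<omega>"
    by (intro AE_frequently_of_indep_events) auto
  then show ?thesis
    by (rule eventually_mono) (use frequently_window_of_frequently_block[OF \<open>0 < L\<close>] in \<open>auto simp: J_def\<close>)
qed

theorem lemma3:
  fixes E :: "('v::finite \<times> 'v) set"
    and q :: "'v \<times> 'v \<Rightarrow> real"
    and P :: "'w measure"
    and X :: "nat \<Rightarrow> 'v \<times> 'v \<Rightarrow> 'w \<Rightarrow> bool"
  assumes "prob_space P"
    and self_loops: "\<forall>i. (i, i) \<in> E"
    and strongly_connected: "\<forall>i j. (i, j) \<in> E\<^sup>+"
    and q_range: "\<forall>e\<in>E. 0 < q e \<and> q e \<le> 1"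
    and indep: "prob_space.indep_vars P (\<lambda>_. count_space UNIV)
                  (\<lambda>(k, e). X k e) {(k, e). 1 \<le> k \<and> e \<in> E}"
    and reliable_prob: "\<forall>k\<ge>1. \<forall>e\<in>E. measure P {\<omega> \<in> space P. X k e \<omega>} = q e"
  shows "AE \<omega> in P. (\<lambda>k. delta (idx E) (Tprod E (\<lambda>k e. X k e \<omega>) k)) \<longlonglongrightarrow> 0"
proof -
  interpret prob_space P by fact
  obtain L j where "0 < L" and positive: "\<And>r. r \<in> idx E \<Longrightarrow> 0 < Tprod E (\<lambda>_ _. True) L r (Inl j)"
    using Tprod_all_reliable_positive[OF self_loops strongly_connected] by metis
  have "E \<noteq> {}" using self_loops by auto
  have "AE \<omega> in P. \<exists>\<^sub>F a in sequentially. \<forall>t\<in>{1..L}. \<forall>e\<in>E. X (a + t) e \<omega>"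
    using q_range by (intro AE_frequently_all_reliable_window[OF _ \<open>E \<noteq> {}\<close> \<open>0 < L\<close> indep reliable_prob]) auto
  then show ?thesis
    by (rule eventually_mono)
      (use delta_Tprod_tendsto_0[OF self_loops positive, where x = "\<lambda>k e. X k e _"] in simp)
qed

end
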